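(* Let $c,M\in\mathbb{N}$ with $c,M\ge1$, and let $A_{c,M}=(n_A)_{n\ge0}$ be defined by $0_A=1$, $n_A=1$ for $1\le n<M$, and $n_A=c$ for $n\ge M$. Then $A_{c,M}$ is a cobweb tiling sequence. (In particular, for $M=1$, the almost constant sequence $0_A=1$, $n_A=c$ for $n\ge1$, is a cobweb tiling sequence.)
   Context: Notation: $n_F\equiv F_n$. A sequence $F=(n_F)_{n\ge0}$ of natural numbers with $0_F=1$ is cobweb-admissible iff every $F$-nomial coefficient $\binom{n}{k}_F=\frac{n_F(n-1)_F\cdots(n-k+1)_F}{1_F2_F\cdots k_F}$, $0\le k\le n$, is a nonnegative integer. The cobweb poset of $F$ has, for each $s\ge1$, a level $\Phi_s$ consisting of $s_F$ distinct vertices (levels pairwise disjoint), plus a root level $\Phi_0$ with one vertex; for $x\in\Phi_i$, $y\in\Phi_j$ one has $x<y$ iff $i<j$. For $1\le a\le b$, the layer $\langle\Phi_a\to\Phi_b\rangle$ is the subposet on $\Phi_a\cup\dots\cup\Phi_b$; it has $m=b-a+1$ levels and its maximal chains form the set $\Phi_a\times\dots\times\Phi_b$. For a permutation $\sigma$ of $\{1,\dots,m\}$, a block of type $\sigma P_m$ in this layer is the subposet induced on $V_a\cup\dots\cup V_b$ where $V_{a-1+i}\subseteq\Phi_{a-1+i}$ and $|V_{a-1+i}|=\sigma(i)_F$ for $i=1,\dots,m$; its maximal chains form the set $V_a\times\dots\times V_b$. A tiling of the layer is a finite family of such blocks ($\sigma$ may vary from block to block) whose sets $V_a\times\dots\times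 V_b$ partition $\Phi_a\times\dots\times\Phi_b$ (pairwise max-disjoint and covering all maximal chains). A cobweb tiling sequence is a cobweb-admissible sequence $F$ such that for all $1\le a\le b$ the layer $\langle\Phi_a\to\Phi_b\rangle$ admits a tiling by blocks of type $\sigma P_{b-a+1}$. *)

theory Defs
  imports "HOL-Combinatorics.Permutations" "HOL-Library.FuncSet"
begin

definition fnom_num :: "(nat \<Rightarrow> nat) \<Rightarrow> nat \<Rightarrow> nat \<Rightarrow> nat" where
  "fnom_num F n k = (\<Prod>i<k. F (n - i))"

definition fnom_den :: "(nat \<Rightarrow> nat) \<Rightarrow> nat \<Rightarrow> nat" where
  "fnom_den F k = (\<Prod>i\<in>{1..k}. F i)"

definition cobweb_admissible :: "(nat \<Rightarrow> nat) \<Rightarrow> bool" where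
  "cobweb_admissible F \<longleftrightarrow> F 0 = 1 \<and>
     (\<forall>n k. k \<le> n \<longrightarrow> fnom_den F k \<noteq> 0 \<and> fnom_den F k dvd fnom_num F n k)"

text \<open>Vertices of level s are the pairs (s, j) with j < s_F; so levels are disjoint.
  A maximal chain of the layer from level a to level b is encoded as a function
  mapping each level i in {a..b} to the index j of its vertex in that level.\<close>
definition layer_chains :: "(nat \<Rightarrow> nat) \<Rightarrow> nat \<Rightarrow> nat \<Rightarrow> (nat \<Rightarrow> nat) set" where
  "layer_chains F a b = (\<Pi>\<^sub>E i\<in>{a..b}. {..<F i})"

text \<open>A block of type sigma P_m (m = b - a + 1) in the layer: given by its vertex sets
  V i \<subseteq> level i for i in {a..b}, with |V (a-1+i)| = (sigma i)_F for some permutation sigma of {1..m}.\<close>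
definition is_block :: "(nat \<Rightarrow> nat) \<Rightarrow> nat \<Rightarrow> nat \<Rightarrow> (nat \<Rightarrow> nat set) \<Rightarrow> bool" where
  "is_block F a b V \<longleftrightarrow> V \<in> extensional {a..b} \<and>
     (\<exists>\<sigma>. \<sigma> permutes {1..b - a + 1} \<and>
        (\<forall>i\<in>{1..b - a + 1}. V (a - 1 + i) \<subseteq> {..<F (a - 1 + i)} \<and>
                            card (V (a - 1 + i)) = F (\<sigma> i)))"

definition block_chains :: "nat \<Rightarrow> nat \<Rightarrow> (nat \<Rightarrow> nat set) \<Rightarrow> (nat \<Rightarrow> nat) set" where
  "block_chains a b V = (\<Pi>\<^sub>E i\<in>{a..b}. V i)"

definition is_tiling :: "(nat \<Rightarrow> nat) \<Rightarrow> nat \<Rightarrow> nat \<Rightarrow> (nat \<Rightarrow> nat set) set \<Rightarrow> bool" where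
  "is_tiling F a b T \<longleftrightarrow> finite T \<and> (\<forall>V\<in>T. is_block F a b V) \<and>
     (\<forall>V\<in>T. \<forall>W\<in>T. V \<noteq> W \<longrightarrow> block_chains a b V \<inter> block_chains a b W = {}) \<and>
     (\<Union>V\<in>T. block_chains a b V) = layer_chains F a b"

definition cobweb_tiling_sequence :: "(nat \<Rightarrow> nat) \<Rightarrow> bool" where
  "cobweb_tiling_sequence F \<longleftrightarrow> cobweb_admissible F \<and>
     (\<forall>a b. 1 \<le> a \<and> a \<le> b \<longrightarrow> (\<exists>T. is_tiling F a b T))"

definition seqA :: "nat \<Rightarrow> nat \<Rightarrow> nat \<Rightarrow> nat" where
  "seqA c M n = (if n = 0 then 1 else if n < M then 1 else c)"

end

theory Submission imports Defs begin

(*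
  A_{c,M} is a divisibility chain: s_F divides t_F whenever 1 <= s <= t.
  For any such chain with positive terms, pairing the factors of the F-nomial
  denominator 1_F ... k_F and numerator n_F ... (n-k+1)_F as (k-i)_F | (n-i)_F
  shows that every F-nomial coefficient is an integer.

  Suppose every level l of the layer <Phi_a -> Phi_b> satisfies
  (l-a+1)_F = l_F or (l-a+1)_F = 1.  Then blocks of the single type id P_m tile the
  layer: each block takes the whole level l when (l-a+1)_F = l_F and a single vertex
  otherwise, so the blocks are the fibres of the projection of the maximal chains
  onto the "singleton" levels.  A_{c,M} satisfies this level condition in every layer,
  which gives the theorem.
*)

text \<open>The F-nomial denominator, read backwards: 1_F 2_F ... k_F = k_F (k-1)_F ... 1_F,
  matching the shape of the numerator n_F (n-1)_F ... (n-k+1)_F.\<close>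
lemma fnom_den_reversed: "fnom_den F k = (\<Prod>i<k. F (k - i))"
proof -
  have "{1..k} = (\<lambda>i. k - i) ` {..<k}"
  proof (intro set_eqI iffI)
    fix j
    assume "j \<in> {1..k}"
    then have "j = k - (k - j)" and "k - j \<in> {..<k}" by auto
    then show "j \<in> (\<lambda>i. k - i) ` {..<k}" by blast
  qed auto
  moreover have "inj_on (\<lambda>i. k - i) {..<k}"
    by (auto simp: inj_on_def)
  ultimately show ?thesis
    by (simp add: fnom_den_def prod.reindex)
qed

lemma divisibility_chain_admissible:
  fixes F :: "nat \<Rightarrow> nat"
  assumes zero: "F 0 = 1"
    and pos: "\<And>i. 1 \<le> i \<Longrightarrow> F i \<noteq> 0"
    and chain: "\<And>i j. 1 \<le> i \<Longrightarrow> i \<le> j \<Longrightarrow> F i dvd F j"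
  shows "cobweb_admissible F"
  unfolding cobweb_admissible_def
proof (intro conjI allI impI)
  fix n k :: nat
  assume "k \<le> n"
  show "fnom_den F k \<noteq> 0"
    using pos by (simp add: fnom_den_def)
  show "fnom_den F k dvd fnom_num F n k"
    unfolding fnom_den_reversed fnom_num_def
    by (rule prod_dvd_prod) (use \<open>k \<le> n\<close> in \<open>auto intro!: chain\<close>)
qed (fact zero)

definition fibre_box :: "'a set \<Rightarrow> ('a \<Rightarrow> 'b set) \<Rightarrow> ('a \<Rightarrow> bool) \<Rightarrow> ('a \<Rightarrow> 'b) \<Rightarrow> 'a \<Rightarrow> 'b set"
  where "fibre_box I A P x = restrict (\<lambda>i. if P i then A i else {x i}) I"

lemma fibre_box_self:
  assumes "x \<in> Pi\<^sub>E I A"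
  shows "x \<in> Pi\<^sub>E I (fibre_box I A P x)"
  using assms by (auto simp: fibre_box_def PiE_iff)

lemma fibre_box_subset:
  assumes "x \<in> Pi\<^sub>E I A"
  shows "Pi\<^sub>E I (fibre_box I A P x) \<subseteq> Pi\<^sub>E I A"
proof
  fix z
  assume z: "z \<in> Pi\<^sub>E I (fibre_box I A P x)"
  have "z i \<in> A i" if "i \<in> I" for i
  proof -
    have "z i \<in> (if P i then A i else {x i})" and "x i \<in> A i"
      using z assms that by (auto simp: fibre_box_def PiE_iff)
    then show ?thesis by (auto split: if_splits)
  qed
  with z show "z \<in> Pi\<^sub>E I A"
    by (auto simp: fibre_box_def PiE_iff)
qed

lemma fibre_box_eq:
  assumes "z \<in> Pi\<^sub>E I (fibre_box I A P x)" and "z \<in> Pi\<^sub>E I (fibre_box I A P y)"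
  shows "fibre_box I A P x = fibre_box I A P y"
proof
  fix i
  show "fibre_box I A P x i = fibre_box I A P y i"
  proof (cases "i \<in> I \<and> \<not> P i")
    case True
    then have "z i = x i" and "z i = y i"
      using assms by (auto simp: fibre_box_def PiE_iff)
    then show ?thesis by (simp add: fibre_box_def)
  next
    case False
    then show ?thesis by (auto simp: fibre_box_def)
  qed
qed

lemma identity_type_tiling:
  fixes F :: "nat \<Rightarrow> nat"
  assumes "1 \<le> a" and "a \<le> b"
    and levels: "\<And>l. l \<in> {a..b} \<Longrightarrow> F (l + 1 - a) = F l \<or> F (l + 1 - a) = 1"
  shows "\<exists>T. is_tiling F a b T"
proof -
  let ?box = "fibre_box {a..b} (\<lambda>l. {..<F l}) (\<lambda>l. F (l + 1 - a) = F l)"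
  let ?L = "layer_chains F a b"
  have block: "is_block F a b (?box x)" if x: "x \<in> ?L" for x
    unfolding is_block_def
  proof (intro conjI exI[of _ id] ballI)
    show "?box x \<in> extensional {a..b}" by (simp add: fibre_box_def)
    show "id permutes {1..b - a + 1}" by (rule permutes_id)
    fix i
    assume "i \<in> {1..b - a + 1}"
    moreover define l where "l = a - 1 + i"
    ultimately have l: "l \<in> {a..b}" and shift: "Suc l - a = i"
      using assms(1,2) by auto
    have "x l < F l"
      using x l by (auto simp: layer_chains_def PiE_iff)
    then show "?box x (a - 1 + i) \<subseteq> {..<F (a - 1 + i)}"
      unfolding l_def[symmetric] using l by (auto simp: fibre_box_def)
    have "F i = F l \<or> F i = 1"
      using levels[OF l] by (simp add: shift)
    then show "card (?box x (a - 1 + i)) = F (id i)"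
      unfolding l_def[symmetric] using l by (auto simp: fibre_box_def shift)
  qed
  have "is_tiling F a b (?box ` ?L)"
    unfolding is_tiling_def block_chains_def
  proof (intro conjI ballI impI)
    show "finite (?box ` ?L)"
      by (simp add: layer_chains_def finite_PiE)
    show "\<And>V. V \<in> ?box ` ?L \<Longrightarrow> is_block F a b V"
      using block by blast
  next
    fix V W
    assume "V \<in> ?box ` ?L" "W \<in> ?box ` ?L" "V \<noteq> W"
    then obtain x y where V: "V = ?box x" and W: "W = ?box y" and "?box x \<noteq> ?box y"
      by blast
    then show "Pi\<^sub>E {a..b} V \<inter> Pi\<^sub>E {a..b} W = {}"
      unfolding V W using fibre_box_eq by blast
  next
    have "Pi\<^sub>E {a..b} (?box x) \<subseteq> ?L" and "x \<in> Pi\<^sub>E {a..b} (?box x)" if "x \<in> ?L" for x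
      using that unfolding layer_chains_def
      by (rule fibre_box_subset, rule fibre_box_self)
    then show "(\<Union>V\<in>?box ` ?L. Pi\<^sub>E {a..b} V) = ?L"
      by blast
  qed
  then show ?thesis by blast
qed

lemma seqA_admissible:
  assumes "1 \<le> c"
  shows "cobweb_admissible (seqA c M)"
  by (rule divisibility_chain_admissible) (use assms in \<open>auto simp: seqA_def\<close>)

text \<open>In the layer from a \<ge> 1, the level l and its position l - a + 1 \<le> l carry equal
  values of A_{c,M}, unless the position lies below M, where the value is 1.\<close>
lemma seqA_levels:
  assumes "1 \<le> a" and "a \<le> l"
  shows "seqA c M (l + 1 - a) = seqA c M l \<or> seqA c M (l + 1 - a) = 1"
  using assms unfolding seqA_def by auto

theorem mainTheorem9:
  fixes c M :: nat
  assumes "1 \<le> c" and "1 \<le> M"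
  shows "cobweb_tiling_sequence (seqA c M)"
  unfolding cobweb_tiling_sequence_def
proof (intro conjI allI impI)
  show "cobweb_admissible (seqA c M)"
    using assms(1) by (rule seqA_admissible)
  fix a b :: nat
  assume "1 \<le> a \<and> a \<le> b"
  then show "\<exists>T. is_tiling (seqA c M) a b T"
    by (intro identity_type_tiling) (simp_all add: seqA_levels[simplified])
qed

end
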